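(* Let $x\in Y$. Then the orbit $W^v.x$ is bounded above for $\le_{Q^\vee}$ (i.e. there is $y\in Y$ with $z\le_{Q^\vee}y$ for all $z\in W^v.x$) if and only if $x\in Y^+$.
   Context: $I$ finite, $A=(a_{i,j})$ a generalized Cartan matrix, $X,Y$ dual free $\mathbb Z$-modules of finite rank with free families $(\alpha_i)\subset X$, $(\alpha_i^\vee)\subset Y$, $\alpha_j(\alpha_i^\vee)=a_{i,j}$; $\mathbb A=Y\otimes\mathbb R$; $r_i(v)=v-\alpha_i(v)\alpha_i^\vee$; $W^v=\langle r_i:i\in I\rangle$; $Q^\vee_+=\bigoplus\mathbb N\alpha_i^\vee$, $x\le_{Q^\vee}y$ iff $y-x\in Q^\vee_+$; $C^v_f=\{v:\alpha_i(v)>0\ \forall i\}$; Tits cone $\mathcal T=\bigcup_{w\in W^v}w\overline{C^v_f}$; $Y^+=Y\cap\mathcal T$. *)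

theory Defs
  imports "HOL-Analysis.Analysis"
begin

text \<open>The real vector space A = Y (x) R is modelled as real^'n (rank n = CARD('n));
  Y is the integer lattice in it; X = Hom(Y,Z) is identified with Z^n via the dual
  basis, so alpha(v) is the inner product alpha \<bullet> v.\<close>

definition Ylat :: "(real^'n) set" where
  "Ylat = {v. \<forall>k. v $ k \<in> \<int>}"

definition gen_cartan :: "('i \<Rightarrow> 'i \<Rightarrow> int) \<Rightarrow> bool" where
  "gen_cartan A \<longleftrightarrow> (\<forall>i. A i i = 2) \<and> (\<forall>i j. i \<noteq> j \<longrightarrow> A i j \<le> 0)
     \<and> (\<forall>i j. A i j = 0 \<longleftrightarrow> A j i = 0)"

definition Z_free :: "('i::finite \<Rightarrow> real^'n) \<Rightarrow> bool" where
  "Z_free v \<longleftrightarrow> (\<forall>c::'i \<Rightarrow> int. (\<Sum>i\<in>UNIV. of_int (c i) *\<^sub>R v i) = 0 \<longrightarrow> (\<forall>i. c i = 0))"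

definition refl_i :: "('i \<Rightarrow> real^'n) \<Rightarrow> ('i \<Rightarrow> real^'n) \<Rightarrow> 'i \<Rightarrow> real^'n \<Rightarrow> real^'n" where
  "refl_i \<alpha> \<alpha>v i v = v - (\<alpha> i \<bullet> v) *\<^sub>R \<alpha>v i"

text \<open>W^v: group generated by the r_i (each r_i is an involution, so the monoid
  generated suffices).\<close>
inductive_set Wv :: "('i \<Rightarrow> real^'n) \<Rightarrow> ('i \<Rightarrow> real^'n) \<Rightarrow> (real^'n \<Rightarrow> real^'n) set"
  for \<alpha> \<alpha>v where
  Wv_id: "id \<in> Wv \<alpha> \<alpha>v"
| Wv_step: "w \<in> Wv \<alpha> \<alpha>v \<Longrightarrow> refl_i \<alpha> \<alpha>v i \<circ> w \<in> Wv \<alpha> \<alpha>v"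

definition Qplus :: "('i::finite \<Rightarrow> real^'n) \<Rightarrow> (real^'n) set" where
  "Qplus \<alpha>v = {(\<Sum>i\<in>UNIV. of_nat (m i) *\<^sub>R \<alpha>v i) | m :: 'i \<Rightarrow> nat. True}"

definition qle :: "('i::finite \<Rightarrow> real^'n) \<Rightarrow> real^'n \<Rightarrow> real^'n \<Rightarrow> bool" where
  "qle \<alpha>v x y \<longleftrightarrow> y - x \<in> Qplus \<alpha>v"

definition Cvf :: "('i \<Rightarrow> real^'n) \<Rightarrow> (real^'n) set" where
  "Cvf \<alpha> = {v. \<forall>i. \<alpha> i \<bullet> v > 0}"

definition tits_cone :: "('i \<Rightarrow> real^'n) \<Rightarrow> ('i \<Rightarrow> real^'n) \<Rightarrow> (real^'n) set" where
  "tits_cone \<alpha> \<alpha>v = (\<Union>w\<in>Wv \<alpha> \<alpha>v. w ` closure (Cvf \<alpha>))"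

end

theory Submission
  imports Defs
begin

text \<open>
  If the orbit of \<open>x\<close> is bounded above by \<open>y\<close>, an orbit element \<open>z\<close> for which \<open>y - z\<close> has minimal
  height is dominant, since reflecting in a simple root with \<open>\<alpha>\<^sub>i(z) < 0\<close> would lower that height.
  The closure of \<open>C\<^sup>v\<^sub>f\<close> is the set of dominant points (\<open>C\<^sup>v\<^sub>f\<close> being nonempty because the \<open>\<alpha>\<^sub>i\<close> are
  linearly independent), so \<open>x \<in> W\<^sup>v z\<close> lies in the Tits cone.

  Conversely, let \<open>\<lambda>\<close> be dominant and \<open>w = r\<^sub>i\<^sub>1 \<cdots> r\<^sub>i\<^sub>k\<close> reduced. Then \<open>\<lambda> - w \<lambda>\<close> is the sum of
  the terms \<open>\<alpha>\<^sub>i\<^sub>j(r\<^sub>i\<^sub>j\<^sub>+\<^sub>1 \<cdots> r\<^sub>i\<^sub>k \<lambda>) \<alpha>\<^sup>\<or>\<^sub>i\<^sub>j\<close>, whose coefficients are nonnegative integers because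
  \<open>u(\<alpha>\<^sub>i)\<close> is a nonnegative combination of simple roots whenever \<open>\<ell>(u r\<^sub>i) \<ge> \<ell>(u)\<close>. This positivity
  of roots is reduced, by factoring off the longest possible piece lying in a subgroup
  \<open>\<langle>r\<^sub>s, r\<^sub>t\<rangle>\<close>, to rank two. There it is explicit: if \<open>a\<^sub>s\<^sub>,\<^sub>t a\<^sub>t\<^sub>,\<^sub>s \<ge> 4\<close> an invariant shows that all roots
  \<open>(r\<^sub>s r\<^sub>t)\<^sup>k \<alpha>\<^sub>s\<close> and \<open>r\<^sub>t (r\<^sub>s r\<^sub>t)\<^sup>k \<alpha>\<^sub>s\<close> are positive, and otherwise a braid relation of length
  \<open>m \<in> {2, 3, 4, 6}\<close> bounds the length of reduced alternating words.
\<close>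

section \<open>Coroot lattice and fundamental chamber\<close>

lemma Ylat_inner_Ints: "u \<in> Ylat \<Longrightarrow> v \<in> Ylat \<Longrightarrow> u \<bullet> v \<in> \<int>"
  unfolding Ylat_def inner_vec_def by (auto intro!: Ints_sum Ints_mult)

lemma Qplus_iff: "x \<in> Qplus \<alpha>v \<longleftrightarrow> (\<exists>m. x = (\<Sum>i\<in>UNIV. of_nat (m i) *\<^sub>R \<alpha>v i))"
  unfolding Qplus_def by auto

lemma Qplus_add_coroot:
  assumes "x \<in> Qplus \<alpha>v"
  shows "x + of_nat c *\<^sub>R \<alpha>v i \<in> Qplus \<alpha>v"
proof -
  obtain m where m: "x = (\<Sum>j\<in>UNIV. of_nat (m j) *\<^sub>R \<alpha>v j)"
    using assms unfolding Qplus_iff by blast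
  have "(\<Sum>j\<in>UNIV. of_nat (m j + (if j = i then c else 0)) *\<^sub>R \<alpha>v j)
      = (\<Sum>j\<in>UNIV. of_nat (m j) *\<^sub>R \<alpha>v j + (if j = i then of_nat c *\<^sub>R \<alpha>v j else 0))"
    by (rule sum.cong) (auto simp: scaleR_add_left)
  also have "\<dots> = x + of_nat c *\<^sub>R \<alpha>v i"
    by (simp add: sum.distrib m)
  finally show ?thesis
    unfolding Qplus_iff by (intro exI[of _ "\<lambda>j. m j + (if j = i then c else 0)"]) simp
qed

lemma Z_free_height_add:
  assumes "Z_free v"
    and "(\<Sum>j\<in>UNIV. of_nat (m' j) *\<^sub>R v j) = (\<Sum>j\<in>UNIV. of_nat (m j) *\<^sub>R v j) + of_int c *\<^sub>R v i"
  shows "int (\<Sum>j\<in>UNIV. m' j) = int (\<Sum>j\<in>UNIV. m j) + c"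
proof -
  define d where "d j = int (m' j) - int (m j) - (if j = i then c else 0)" for j
  have "(\<Sum>j\<in>UNIV. of_int (d j) *\<^sub>R v j) = (\<Sum>j\<in>UNIV. of_nat (m' j) *\<^sub>R v j
      - of_nat (m j) *\<^sub>R v j - (if j = i then of_int c *\<^sub>R v j else 0))"
    by (rule sum.cong) (auto simp: d_def scaleR_diff_left)
  also have "\<dots> = 0"
    using assms(2) by (simp add: sum_subtractf)
  finally have "\<forall>j. d j = 0"
    using assms(1) unfolding Z_free_def by blast
  then have "(\<Sum>j\<in>UNIV. d j) = 0"
    by simp
  then show ?thesis
    unfolding d_def by (simp add: sum_subtractf)
qed

lemma common_denominator: "\<exists>D::int. D > 0 \<and> (\<forall>i. of_int D * (c::'i::finite \<Rightarrow> rat) i \<in> \<int>)"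
proof -
  define d where "d i = snd (quotient_of (c i))" for i
  define D where "D = (\<Prod>i\<in>UNIV. d i)"
  have d_pos: "d i > 0" for i
    unfolding d_def by (rule quotient_of_denom_pos')
  have "of_int D * c i \<in> \<int>" for i
  proof -
    have c: "c i = of_int (fst (quotient_of (c i))) / of_int (d i)"
      unfolding d_def by (rule quotient_of_div) simp
    have "D = d i * (\<Prod>j\<in>UNIV - {i}. d j)"
      unfolding D_def by (simp add: prod.remove)
    then have "of_int D * c i = of_int (fst (quotient_of (c i))) * of_int (\<Prod>j\<in>UNIV - {i}. d j)"
      using d_pos[of i] c by (simp add: field_simps)
    then show ?thesis
      by (auto intro!: Ints_mult)
  qed
  moreover have "D > 0"
    unfolding D_def using d_pos by (simp add: prod_pos)
  ultimately show ?thesis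
    by blast
qed

lemma Z_free_rat_independent:
  assumes "\<forall>i. \<alpha> i \<in> Ylat" and "Z_free \<alpha>"
    and "(\<Sum>i\<in>UNIV. real_of_rat (c i) *\<^sub>R \<alpha> i) = 0"
  shows "c i = 0"
proof -
  obtain D :: int where D: "D > 0" "\<forall>i. of_int D * c i \<in> \<int>"
    using common_denominator by blast
  define e where "e i = \<lfloor>of_int D * c i\<rfloor>" for i
  have e: "of_int (e i) = of_int D * c i" for i
  proof -
    obtain z where "of_int D * c i = of_int z"
      using D(2) by (auto elim: Ints_cases)
    then show ?thesis
      unfolding e_def by simp
  qed
  have e_real: "real_of_int (e i) = of_int D * real_of_rat (c i)" for i
    using arg_cong[OF e[of i], of real_of_rat] by (simp add: of_rat_mult)
  have "(\<Sum>i\<in>UNIV. of_int (e i) *\<^sub>R \<alpha> i) = (\<Sum>i\<in>UNIV. of_int D *\<^sub>R (real_of_rat (c i) *\<^sub>R \<alpha> i))"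
    by (simp add: e_real)
  also have "\<dots> = of_int D *\<^sub>R (\<Sum>i\<in>UNIV. real_of_rat (c i) *\<^sub>R \<alpha> i)"
    by (rule scaleR_sum_right[symmetric])
  also have "\<dots> = 0"
    using assms(3) by simp
  finally have "(\<Sum>i\<in>UNIV. of_int (e i) *\<^sub>R \<alpha> i) = 0" .
  then have "\<forall>i. e i = 0"
    using assms(2) unfolding Z_free_def by blast
  then show ?thesis
    using e[of i] D(1) by simp
qed

lemma Z_free_exists_dual_point:
  fixes \<alpha> :: "'i::finite \<Rightarrow> real^'n"
  assumes Y: "\<forall>i. \<alpha> i \<in> Ylat" and free: "Z_free \<alpha>"
  shows "\<exists>c. \<forall>i. \<alpha> i \<bullet> c = 1"
proof -
  define M :: "rat^'n^'i" where "M = (\<chi> i k. of_int \<lfloor>\<alpha> i $ k\<rfloor>)"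
  have M: "real_of_rat (M $ i $ k) = \<alpha> i $ k" for i k
  proof -
    have "\<alpha> i $ k \<in> \<int>"
      using Y unfolding Ylat_def by blast
    then obtain z where "\<alpha> i $ k = of_int z"
      by (auto elim: Ints_cases)
    then show ?thesis
      unfolding M_def by simp
  qed
  have independent: "\<forall>c. (\<Sum>i\<in>UNIV. c i *s row i M) = 0 \<longrightarrow> (\<forall>i. c i = 0)"
  proof (intro allI impI)
    fix c :: "'i \<Rightarrow> rat" and i
    assume rows: "(\<Sum>i\<in>UNIV. c i *s row i M) = 0"
    have "(\<Sum>i\<in>UNIV. real_of_rat (c i) *\<^sub>R \<alpha> i) $ k = 0" for k
    proof -
      have "(\<Sum>i\<in>UNIV. c i * M $ i $ k) = 0"
        using arg_cong[OF rows, of "\<lambda>v. v $ k"] by (simp add: row_def)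
      then have "real_of_rat (\<Sum>i\<in>UNIV. c i * M $ i $ k) = 0"
        by simp
      then show ?thesis
        by (simp add: of_rat_sum of_rat_mult M)
    qed
    then have "(\<Sum>i\<in>UNIV. real_of_rat (c i) *\<^sub>R \<alpha> i) = 0"
      by (simp add: vec_eq_iff)
    then show "c i = 0"
      by (rule Z_free_rat_independent[OF Y free])
  qed
  obtain B :: "rat^'i^'n" where B: "M ** B = mat 1"
    using iffD2[OF matrix_right_invertible_independent_rows independent] by blast
  define d where "d = B *v (\<chi> i. 1)"
  have Md: "M *v d = (\<chi> i. 1)"
    unfolding d_def by (simp add: matrix_vector_mul_assoc B)
  define c where "c = (\<chi> k. real_of_rat (d $ k))"
  have "\<alpha> i \<bullet> c = real_of_rat ((M *v d) $ i)" for i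
    unfolding c_def inner_vec_def matrix_vector_mult_def
    by (simp add: of_rat_sum of_rat_mult M)
  then show ?thesis
    using Md by auto
qed

lemma closure_Cvf:
  assumes "Cvf \<alpha> \<noteq> {}"
  shows "closure (Cvf \<alpha>) = {v. \<forall>i. 0 \<le> \<alpha> i \<bullet> v}"
proof -
  have Cvf: "Cvf \<alpha> = (\<Inter>i. {v. \<alpha> i \<bullet> v > 0})"
    unfolding Cvf_def by auto
  obtain c where "\<forall>i. \<alpha> i \<bullet> c > 0"
    using assms unfolding Cvf_def by auto
  then have "\<alpha> i \<noteq> 0" for i
    by (metis inner_zero_left less_irrefl)
  moreover have "closure (Cvf \<alpha>) = (\<Inter>i. closure {v. \<alpha> i \<bullet> v > 0})"
    using assms unfolding Cvf
    by (subst closure_Inter_convex_open) (auto simp: convex_halfspace_gt open_halfspace_gt)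
  ultimately show ?thesis
    by auto
qed

section \<open>Rank two\<close>

primrec alt_word :: "'i \<Rightarrow> 'i \<Rightarrow> nat \<Rightarrow> 'i list" where
  "alt_word s t 0 = []"
| "alt_word s t (Suc k) = (if even k then t else s) # alt_word s t k"

lemma set_alt_word: "set (alt_word s t k) \<subseteq> {s, t}"
  by (induction k) auto

lemma length_alt_word [simp]: "length (alt_word s t k) = k"
  by (induction k) auto

lemma alt_word_add: "\<exists>u. alt_word s t (d + m) = u @ alt_word s t m \<and> set u \<subseteq> {s, t} \<and> length u = d"
proof (induction d)
  case (Suc d)
  then obtain u where "alt_word s t (d + m) = u @ alt_word s t m" "set u \<subseteq> {s, t}" "length u = d"
    by blast
  then show ?case
    by (intro exI[of _ "(if even (d + m) then t else s) # u"]) auto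
qed simp

lemma alt_word_snoc: "m > 0 \<Longrightarrow> \<exists>u. alt_word t s m = u @ [s] \<and> set u \<subseteq> {s, t} \<and> length u = m - 1"
proof (induction m)
  case (Suc m)
  show ?case
  proof (cases "m = 0")
    case False
    then obtain u where "alt_word t s m = u @ [s]" "set u \<subseteq> {s, t}" "length u = m - 1"
      using Suc by auto
    then show ?thesis
      using False by (intro exI[of _ "(if even m then s else t) # u"]) auto
  qed simp
qed simp

lemma eq_alt_word:
  assumes "s \<noteq> t" and "set w \<subseteq> {s, t}" and "\<forall>p x q. w \<noteq> p @ [x, x] @ q"
    and "w = [] \<or> last w = t"
  shows "w = alt_word s t (length w)"
  using assms(2-)
proof (induction w)
  case (Cons x w)
  show ?case
  proof (cases "w = []")
    case False
    have "\<forall>p y q. w \<noteq> p @ [y, y] @ q"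
      using Cons.prems(2) by (metis append_Cons)
    then have w: "w = alt_word s t (length w)"
      using Cons False by auto
    obtain k where k: "length w = Suc k"
      using False by (cases w) auto
    have "x \<noteq> hd w"
      using Cons.prems(2) False by (metis append_Cons append_Nil list.collapse)
    moreover have "hd w = (if even k then t else s)"
      using w k by (metis alt_word.simps(2) list.sel(1))
    ultimately have "x = (if even (Suc k) then t else s)"
      using Cons.prems(1) assms(1) by auto
    then show ?thesis
      using w k by simp
  qed (use Cons in simp)
qed simp

lemma alt_word_small:
  "alt_word s t 2 = [s, t]" "alt_word s t 3 = [t, s, t]"
  "alt_word s t 4 = [s, t, s, t]" "alt_word s t 6 = [s, t, s, t, s, t]"
proof -
  have "alt_word s t (Suc (Suc 0)) = [s, t]" "alt_word s t (Suc (Suc (Suc 0))) = [t, s, t]"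
    "alt_word s t (Suc (Suc (Suc (Suc 0)))) = [s, t, s, t]"
    "alt_word s t (Suc (Suc (Suc (Suc (Suc (Suc 0)))))) = [s, t, s, t, s, t]"
    by simp_all
  then show "alt_word s t 2 = [s, t]" "alt_word s t 3 = [t, s, t]"
    "alt_word s t 4 = [s, t, s, t]" "alt_word s t 6 = [s, t, s, t, s, t]"
    by (simp_all only: eval_nat_numeral BitM.simps numeral_One One_nat_def)
qed

text \<open>If \<open>v = \<lambda> + c\<^sub>1 \<alpha>\<^sub>s + c\<^sub>2 \<alpha>\<^sub>t\<close> with \<open>\<lambda>(\<alpha>\<^sup>\<or>\<^sub>s) = x\<close>, \<open>\<lambda>(\<alpha>\<^sup>\<or>\<^sub>t) = y\<close>, \<open>a = -a\<^sub>s\<^sub>,\<^sub>t\<close> and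
  \<open>b = -a\<^sub>t\<^sub>,\<^sub>s\<close>, then the recursion gives the coefficients of \<open>r\<^sub>s v\<close> and \<open>r\<^sub>t v\<close>.\<close>
primrec dihedral_coeffs :: "'i \<Rightarrow> 'i \<Rightarrow> real \<Rightarrow> real \<Rightarrow> real \<Rightarrow> real \<Rightarrow> 'i list \<Rightarrow> real \<times> real" where
  "dihedral_coeffs s t a b x y [] = (0, 0)"
| "dihedral_coeffs s t a b x y (j # w) = (case dihedral_coeffs s t a b x y w of (c\<^sub>1, c\<^sub>2) \<Rightarrow>
      if j = s then (- c\<^sub>1 - x + a * c\<^sub>2, c\<^sub>2) else (c\<^sub>1, - c\<^sub>2 - y + b * c\<^sub>1))"

text \<open>The coordinates of \<open>w(\<alpha>\<^sub>s)\<close> in the basis \<open>\<alpha>\<^sub>s, \<alpha>\<^sub>t\<close> for the alternating word \<open>w\<close> of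
  length \<open>k\<close> (here \<open>\<lambda> = \<alpha>\<^sub>s\<close>, so \<open>x = 2\<close> and \<open>y = -b\<close>).\<close>
definition alt_root :: "'i \<Rightarrow> 'i \<Rightarrow> real \<Rightarrow> real \<Rightarrow> nat \<Rightarrow> real \<times> real" where
  "alt_root s t a b k = (case dihedral_coeffs s t a b 2 (- b) (alt_word s t k) of (c\<^sub>1, c\<^sub>2) \<Rightarrow> (1 + c\<^sub>1, c\<^sub>2))"

lemma alt_root_0: "alt_root s t a b 0 = (1, 0)"
  by (simp add: alt_root_def)

lemma alt_root_Suc:
  assumes "s \<noteq> t"
  shows "alt_root s t a b (Suc k) = (case alt_root s t a b k of (p, q) \<Rightarrow>
           if even k then (p, b * p - q) else (a * q - p, q))"
  using assms by (auto simp: alt_root_def algebra_simps split: prod.split)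

lemma alt_root_infinite_invariant:
  fixes a b :: real
  assumes "s \<noteq> t" and "0 \<le> a" and "0 \<le> b" and "4 \<le> a * b"
    and "alt_root s t a b k = (p, q)"
  shows "0 \<le> p \<and> 0 \<le> q \<and> (if even k then 2 * q \<le> b * p else 2 * p \<le> a * q)"
  using assms(5)
proof (induction k arbitrary: p q)
  case 0
  then show ?case
    using assms(3) by (simp add: alt_root_0)
next
  case (Suc k)
  obtain p' q' where pq': "alt_root s t a b k = (p', q')"
    by fastforce
  then have IH: "0 \<le> p'" "0 \<le> q'" "if even k then 2 * q' \<le> b * p' else 2 * p' \<le> a * q'"
    using Suc.IH by auto
  show ?case
  proof (cases "even k")
    case True
    then have pq: "p = p'" "q = b * p' - q'"
      using Suc.prems pq' assms(1) by (auto simp: alt_root_Suc)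
    have "a * (2 * q') \<le> a * (b * p')"
      using IH(3) True assms(2) by (intro mult_left_mono) auto
    moreover have "4 * p' \<le> (a * b) * p'"
      using assms(4) IH(1) by (rule mult_right_mono)
    ultimately have "2 * p' \<le> a * (b * p' - q')"
      by (simp add: algebra_simps)
    moreover have "0 \<le> b * p' - q'"
      using IH(2,3) True by simp
    ultimately show ?thesis
      unfolding pq using True IH(1) by simp
  next
    case False
    then have pq: "p = a * q' - p'" "q = q'"
      using Suc.prems pq' assms(1) by (auto simp: alt_root_Suc)
    have "b * (2 * p') \<le> b * (a * q')"
      using IH(3) False assms(3) by (intro mult_left_mono) auto
    moreover have "4 * q' \<le> (a * b) * q'"
      using assms(4) IH(2) by (rule mult_right_mono)
    ultimately have "2 * q' \<le> b * (a * q' - p')"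
      by (simp add: algebra_simps)
    moreover have "0 \<le> a * q' - p'"
      using IH(1,3) False by simp
    ultimately show ?thesis
      unfolding pq using False IH(2) by simp
  qed
qed

lemma alt_root_nonneg_infinite:
  fixes a b :: real
  assumes "s \<noteq> t" and "0 \<le> a" and "0 \<le> b" and "4 \<le> a * b"
  shows "0 \<le> fst (alt_root s t a b k) \<and> 0 \<le> snd (alt_root s t a b k)"
proof -
  obtain p q where pq: "alt_root s t a b k = (p, q)"
    by fastforce
  then have "0 \<le> p \<and> 0 \<le> q"
    using alt_root_infinite_invariant[OF assms] by blast
  then show ?thesis
    unfolding pq by simp
qed

lemma small_cartan_pairs:
  fixes a b :: int
  assumes "0 \<le> a" and "0 \<le> b" and "a = 0 \<longleftrightarrow> b = 0" and "a * b < 4"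
  shows "(a, b) \<in> {(0, 0), (1, 1), (1, 2), (2, 1), (1, 3), (3, 1)}"
proof -
  have "a \<le> 3 \<and> b \<le> 3"
  proof (cases "a = 0")
    case False
    then have "a \<le> a * b" "b \<le> a * b"
      using assms by (simp_all add: mult_le_cancel_left1 mult_le_cancel_right1)
    then show ?thesis
      using assms(4) by linarith
  qed (use assms in simp)
  then have "a \<in> {0, 1, 2, 3}" "b \<in> {0, 1, 2, 3}"
    using assms(1,2) by auto
  then show ?thesis
    using assms(3,4) by (elim insertE emptyE) simp_all
qed

lemma dihedral_braid_relations:
  assumes "s \<noteq> t"
  shows "dihedral_coeffs s t 0 0 x y (alt_word s t 2) = dihedral_coeffs s t 0 0 x y (alt_word t s 2)"
    and "dihedral_coeffs s t 1 1 x y (alt_word s t 3) = dihedral_coeffs s t 1 1 x y (alt_word t s 3)"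
    and "dihedral_coeffs s t 1 2 x y (alt_word s t 4) = dihedral_coeffs s t 1 2 x y (alt_word t s 4)"
    and "dihedral_coeffs s t 2 1 x y (alt_word s t 4) = dihedral_coeffs s t 2 1 x y (alt_word t s 4)"
    and "dihedral_coeffs s t 1 3 x y (alt_word s t 6) = dihedral_coeffs s t 1 3 x y (alt_word t s 6)"
    and "dihedral_coeffs s t 3 1 x y (alt_word s t 6) = dihedral_coeffs s t 3 1 x y (alt_word t s 6)"
  using assms by (simp_all add: alt_word_small algebra_simps)

lemma alt_root_nonneg_finite:
  assumes "s \<noteq> t"
  defines "nonneg a b m \<equiv> \<forall>k<m. 0 \<le> fst (alt_root s t a b k) \<and> 0 \<le> snd (alt_root s t a b k)"
  shows "nonneg 0 0 2" and "nonneg 1 1 3" and "nonneg 1 2 4" and "nonneg 2 1 4" and "nonneg 1 3 6"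
    and "nonneg 3 1 6"
  using assms(1) unfolding nonneg_def
  by (simp_all add: alt_root_0 alt_root_Suc eval_nat_numeral All_less_Suc)

lemma dihedral_finite_type:
  fixes a b :: int
  assumes "s \<noteq> t" and "0 \<le> a" and "0 \<le> b" and "a = 0 \<longleftrightarrow> b = 0" and "a * b < 4"
  obtains m where "0 < m"
    and "\<And>x y. dihedral_coeffs s t a b x y (alt_word s t m) = dihedral_coeffs s t a b x y (alt_word t s m)"
    and "\<forall>k<m. 0 \<le> fst (alt_root s t a b k) \<and> 0 \<le> snd (alt_root s t a b k)"
proof -
  note braid = dihedral_braid_relations[OF assms(1)] and roots = alt_root_nonneg_finite[OF assms(1)]
  from small_cartan_pairs[OF assms(2-5)]
  consider "a = 0" "b = 0" | "a = 1" "b = 1" | "a = 1" "b = 2" | "a = 2" "b = 1" | "a = 1" "b = 3" | "a = 3" "b = 1"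
    by auto
  then show thesis
  proof cases
    case 1
    show thesis
      by (rule that[of 2]) (use 1 braid(1) roots(1) in simp_all)
  next
    case 2
    show thesis
      by (rule that[of 3]) (use 2 braid(2) roots(2) in simp_all)
  next
    case 3
    show thesis
      by (rule that[of 4]) (use 3 braid(3) roots(3) in simp_all)
  next
    case 4
    show thesis
      by (rule that[of 4]) (use 4 braid(4) roots(4) in simp_all)
  next
    case 5
    show thesis
      by (rule that[of 6]) (use 5 braid(5) roots(5) in simp_all)
  next
    case 6
    show thesis
      by (rule that[of 6]) (use 6 braid(6) roots(6) in simp_all)
  qed
qed

section \<open>Weyl group and positivity of roots\<close>

locale cartan_realization =
  fixes A :: "'i::finite \<Rightarrow> 'i \<Rightarrow> int" and \<alpha> \<alpha>v :: "'i \<Rightarrow> real^'n"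
  assumes gen_cartan: "gen_cartan A"
    and roots_Ylat: "\<forall>i. \<alpha> i \<in> Ylat" and coroots_Ylat: "\<forall>i. \<alpha>v i \<in> Ylat"
    and roots_free: "Z_free \<alpha>" and coroots_free: "Z_free \<alpha>v"
    and pairing: "\<forall>i j. \<alpha> j \<bullet> \<alpha>v i = of_int (A i j)"
begin

lemma pairing_diag: "\<alpha> i \<bullet> \<alpha>v i = 2"
  using pairing gen_cartan unfolding gen_cartan_def by simp

lemma refl_i_involutive [simp]: "refl_i \<alpha> \<alpha>v i (refl_i \<alpha> \<alpha>v i v) = v"
  unfolding refl_i_def by (simp add: inner_commute pairing_diag algebra_simps)

lemma Wv_comp: "g \<in> Wv \<alpha> \<alpha>v \<Longrightarrow> h \<in> Wv \<alpha> \<alpha>v \<Longrightarrow> g \<circ> h \<in> Wv \<alpha> \<alpha>v"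
  by (induction rule: Wv.induct) (simp_all add: comp_assoc Wv.Wv_step)

lemma Wv_inverse: "h \<in> Wv \<alpha> \<alpha>v \<Longrightarrow> \<exists>g\<in>Wv \<alpha> \<alpha>v. \<forall>v. g (h v) = v"
proof (induction rule: Wv.induct)
  case (Wv_step h i)
  then obtain g where g: "g \<in> Wv \<alpha> \<alpha>v" "\<forall>v. g (h v) = v"
    by blast
  have "g \<circ> refl_i \<alpha> \<alpha>v i \<in> Wv \<alpha> \<alpha>v"
    using Wv_comp[OF g(1) Wv.Wv_step[OF Wv.Wv_id]] by simp
  moreover have "\<forall>v. (g \<circ> refl_i \<alpha> \<alpha>v i) ((refl_i \<alpha> \<alpha>v i \<circ> h) v) = v"
    using g(2) by simp
  ultimately show ?case
    by blast
next
  case Wv_id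
  show ?case
    using Wv.Wv_id by (intro bexI[of _ id]) simp_all
qed

lemma refl_i_Ylat:
  assumes "v \<in> Ylat"
  shows "refl_i \<alpha> \<alpha>v i v \<in> Ylat"
proof -
  have "\<alpha> i \<bullet> v \<in> \<int>"
    using Ylat_inner_Ints roots_Ylat assms by blast
  then show ?thesis
    using assms coroots_Ylat unfolding Ylat_def refl_i_def by (auto intro!: Ints_diff Ints_mult)
qed

lemma Wv_Ylat: "h \<in> Wv \<alpha> \<alpha>v \<Longrightarrow> v \<in> Ylat \<Longrightarrow> h v \<in> Ylat"
  by (induction rule: Wv.induct) (auto intro: refl_i_Ylat)

lemma tits_cone_iff: "x \<in> tits_cone \<alpha> \<alpha>v \<longleftrightarrow> (\<exists>h\<in>Wv \<alpha> \<alpha>v. \<forall>i. 0 \<le> \<alpha> i \<bullet> h x)"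
proof -
  obtain c where "\<forall>i. \<alpha> i \<bullet> c = 1"
    using Z_free_exists_dual_point[OF roots_Ylat roots_free] by blast
  then have "c \<in> Cvf \<alpha>"
    unfolding Cvf_def by simp
  then have closure: "closure (Cvf \<alpha>) = {v. \<forall>i. 0 \<le> \<alpha> i \<bullet> v}"
    using closure_Cvf by blast
  show ?thesis
  proof
    assume "x \<in> tits_cone \<alpha> \<alpha>v"
    then obtain g z where g: "g \<in> Wv \<alpha> \<alpha>v" and z: "z \<in> closure (Cvf \<alpha>)" "x = g z"
      unfolding tits_cone_def by blast
    obtain h where h: "h \<in> Wv \<alpha> \<alpha>v" "\<forall>v. h (g v) = v"
      using Wv_inverse[OF g] by blast
    have "\<forall>i. 0 \<le> \<alpha> i \<bullet> h x"
      using z closure h(2) by simp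
    then show "\<exists>h\<in>Wv \<alpha> \<alpha>v. \<forall>i. 0 \<le> \<alpha> i \<bullet> h x"
      using h(1) by blast
  next
    assume "\<exists>h\<in>Wv \<alpha> \<alpha>v. \<forall>i. 0 \<le> \<alpha> i \<bullet> h x"
    then obtain h where h: "h \<in> Wv \<alpha> \<alpha>v" "\<forall>i. 0 \<le> \<alpha> i \<bullet> h x"
      by blast
    obtain g where g: "g \<in> Wv \<alpha> \<alpha>v" "\<forall>v. g (h v) = v"
      using Wv_inverse[OF h(1)] by blast
    have "h x \<in> closure (Cvf \<alpha>)"
      using h(2) closure by simp
    moreover have "x = g (h x)"
      using g(2) by simp
    ultimately show "x \<in> tits_cone \<alpha> \<alpha>v"
      unfolding tits_cone_def using g(1) by blast
  qed
qed

text \<open>The contragredient action of \<open>r\<^sub>i\<close> on \<open>X\<close>, where the roots live; word lengths and positivity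
  of roots are measured there.\<close>
definition dual_refl :: "'i \<Rightarrow> real^'n \<Rightarrow> real^'n" where
  "dual_refl i b = b - (b \<bullet> \<alpha>v i) *\<^sub>R \<alpha> i"

primrec dual_word_act :: "'i list \<Rightarrow> real^'n \<Rightarrow> real^'n" where
  "dual_word_act [] = id"
| "dual_word_act (i # w) = dual_refl i \<circ> dual_word_act w"

primrec word_act :: "'i list \<Rightarrow> real^'n \<Rightarrow> real^'n" where
  "word_act [] = id"
| "word_act (i # w) = refl_i \<alpha> \<alpha>v i \<circ> word_act w"

lemma dual_refl_involutive [simp]: "dual_refl i (dual_refl i b) = b"
  unfolding dual_refl_def by (simp add: inner_diff_left pairing_diag algebra_simps)

lemma dual_word_act_append: "dual_word_act (u @ v) = dual_word_act u \<circ> dual_word_act v"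
  by (induction u) auto

lemma dual_word_act_cancel: "dual_word_act (p @ [x, x] @ q) = dual_word_act (p @ q)"
  by (simp add: dual_word_act_append fun_eq_iff)

lemma dual_word_act_snoc_cancel: "dual_word_act (p @ [x, x]) = dual_word_act p"
  using dual_word_act_cancel[of p x "[]"] by simp

lemma dual_word_act_lincomb:
  "dual_word_act w (a *\<^sub>R x + b *\<^sub>R y) = a *\<^sub>R dual_word_act w x + b *\<^sub>R dual_word_act w y"
proof (induction w)
  case (Cons i w)
  then show ?case
    by (simp add: dual_refl_def inner_add_left algebra_simps)
qed simp

lemma inner_dual_word_act: "dual_word_act (rev w) b \<bullet> v = b \<bullet> word_act w v"
  by (induction w arbitrary: b)
     (auto simp: dual_word_act_append dual_refl_def refl_i_def inner_diff_left inner_diff_right algebra_simps)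

lemma word_act_eq_if_dual_word_act_eq:
  assumes "dual_word_act (rev u) = dual_word_act (rev w)"
  shows "word_act u = word_act w"
proof
  fix v
  have "b \<bullet> (word_act u v - word_act w v) = 0" for b
    using assms by (simp add: inner_diff_right flip: inner_dual_word_act)
  then show "word_act u v = word_act w v"
    by (metis eq_iff_diff_eq_0 inner_eq_zero_iff)
qed

lemma word_act_in_Wv: "word_act w \<in> Wv \<alpha> \<alpha>v"
  by (induction w) (metis word_act.simps(1) Wv.Wv_id, metis word_act.simps(2) Wv.Wv_step)

lemma Wv_obtain_word:
  assumes "h \<in> Wv \<alpha> \<alpha>v"
  obtains w where "h = word_act w"
  using assms by (induction rule: Wv.induct) (metis word_act.simps(1), metis word_act.simps(2))

definition word_length :: "'i set \<Rightarrow> (real^'n \<Rightarrow> real^'n) \<Rightarrow> nat" where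
  "word_length S g = (LEAST k. \<exists>w. set w \<subseteq> S \<and> length w = k \<and> dual_word_act w = g)"

lemma word_length_le: "set w \<subseteq> S \<Longrightarrow> word_length S (dual_word_act w) \<le> length w"
  unfolding word_length_def by (rule Least_le) blast

lemma reduced_word_exists:
  assumes "set w \<subseteq> S"
  obtains u where "set u \<subseteq> S" "length u = word_length S (dual_word_act w)"
    "dual_word_act u = dual_word_act w"
  using LeastI_ex[of "\<lambda>k. \<exists>u. set u \<subseteq> S \<and> length u = k \<and> dual_word_act u = dual_word_act w"] assms
  unfolding word_length_def by blast

lemma word_length_comp:
  assumes "set u \<subseteq> S" and "set v \<subseteq> S'" and "S' \<subseteq> S"
  shows "word_length S (dual_word_act u \<circ> dual_word_act v)
    \<le> word_length S (dual_word_act u) + word_length S' (dual_word_act v)"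
proof -
  obtain u' where u': "set u' \<subseteq> S" "length u' = word_length S (dual_word_act u)"
      "dual_word_act u' = dual_word_act u"
    using reduced_word_exists[OF assms(1)] by blast
  obtain v' where v': "set v' \<subseteq> S'" "length v' = word_length S' (dual_word_act v)"
      "dual_word_act v' = dual_word_act v"
    using reduced_word_exists[OF assms(2)] by blast
  have "dual_word_act u \<circ> dual_word_act v = dual_word_act (u' @ v')"
    using u' v' by (simp add: dual_word_act_append)
  moreover have "set (u' @ v') \<subseteq> S"
    using u' v' assms(3) by auto
  ultimately show ?thesis
    using word_length_le[of "u' @ v'" S] u' v' by simp
qed

lemma reduced_word_square_free:
  assumes "set w \<subseteq> S" and "length w = word_length S (dual_word_act w)"
  shows "w \<noteq> p @ [x, x] @ q"
proof
  assume w: "w = p @ [x, x] @ q"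
  then have "dual_word_act w = dual_word_act (p @ q)"
    by (simp only: dual_word_act_cancel)
  then have "word_length S (dual_word_act w) \<le> length (p @ q)"
    using word_length_le[of "p @ q" S] assms(1) w by simp
  then show False
    using assms(2) w by simp
qed

lemma reduced_word_prefix:
  assumes "word_length UNIV (dual_word_act (p @ q)) = length (p @ q)"
  shows "word_length UNIV (dual_word_act p) = length p"
proof (rule ccontr)
  assume "word_length UNIV (dual_word_act p) \<noteq> length p"
  then have shorter: "word_length UNIV (dual_word_act p) < length p"
    using word_length_le[of p UNIV] by simp
  obtain p' where p': "length p' = word_length UNIV (dual_word_act p)" "dual_word_act p' = dual_word_act p"
    using reduced_word_exists[of p UNIV] by blast
  have "dual_word_act (p' @ q) = dual_word_act (p @ q)"
    using p' by (simp add: dual_word_act_append)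
  then have "word_length UNIV (dual_word_act (p @ q)) \<le> length (p' @ q)"
    using word_length_le[of "p' @ q" UNIV] by simp
  then show False
    using assms shorter p' by simp
qed

definition pos_cone :: "(real^'n) set" where
  "pos_cone = {(\<Sum>k\<in>UNIV. c k *\<^sub>R \<alpha> k) | c. \<forall>k. 0 \<le> c k}"

lemma root_in_pos_cone: "\<alpha> s \<in> pos_cone"
proof -
  have "(\<Sum>k\<in>UNIV. (if k = s then 1 else 0) *\<^sub>R \<alpha> k) = (\<Sum>k\<in>UNIV. if k = s then \<alpha> k else 0)"
    by (rule sum.cong) auto
  then have "\<alpha> s = (\<Sum>k\<in>UNIV. (if k = s then 1 else 0) *\<^sub>R \<alpha> k)"
    by simp
  then show ?thesis
    unfolding pos_cone_def by fastforce
qed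

lemma pos_cone_lincomb:
  assumes "x \<in> pos_cone" and "y \<in> pos_cone" and "0 \<le> a" and "0 \<le> b"
  shows "a *\<^sub>R x + b *\<^sub>R y \<in> pos_cone"
proof -
  obtain c d where cd: "\<forall>k. 0 \<le> c k" "x = (\<Sum>k\<in>UNIV. c k *\<^sub>R \<alpha> k)"
      "\<forall>k. 0 \<le> d k" "y = (\<Sum>k\<in>UNIV. d k *\<^sub>R \<alpha> k)"
    using assms(1,2) unfolding pos_cone_def by blast
  show ?thesis
    unfolding pos_cone_def
    by (rule CollectI, rule exI[of _ "\<lambda>k. a * c k + b * d k"])
       (use cd assms(3,4) in \<open>simp add: scaleR_add_left sum.distrib scaleR_sum_right\<close>)
qed

lemma pos_cone_inner_nonneg: "b \<in> pos_cone \<Longrightarrow> \<forall>i. 0 \<le> \<alpha> i \<bullet> y \<Longrightarrow> 0 \<le> b \<bullet> y"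
  unfolding pos_cone_def by (auto simp: inner_sum_left intro!: sum_nonneg)

lemma dual_word_act_dihedral:
  fixes b :: "real^'n"
  assumes "s \<noteq> t" and "set w \<subseteq> {s, t}"
  defines "c \<equiv> dihedral_coeffs s t (of_int (- A s t)) (of_int (- A t s)) (b \<bullet> \<alpha>v s) (b \<bullet> \<alpha>v t) w"
  shows "dual_word_act w b = b + fst c *\<^sub>R \<alpha> s + snd c *\<^sub>R \<alpha> t"
  using assms(2) unfolding c_def
proof (induction w)
  case (Cons j w)
  obtain c\<^sub>1 c\<^sub>2 where c: "dihedral_coeffs s t (of_int (- A s t)) (of_int (- A t s)) (b \<bullet> \<alpha>v s) (b \<bullet> \<alpha>v t) w = (c\<^sub>1, c\<^sub>2)"
    by fastforce
  have "dual_word_act (j # w) b = dual_refl j (b + c\<^sub>1 *\<^sub>R \<alpha> s + c\<^sub>2 *\<^sub>R \<alpha> t)"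
    using Cons c by simp
  moreover have "\<alpha> t \<bullet> \<alpha>v s = of_int (A s t)" "\<alpha> s \<bullet> \<alpha>v t = of_int (A t s)"
    using pairing by auto
  moreover have "j = s \<or> j = t"
    using Cons.prems by auto
  ultimately show ?case
    using c assms(1) by (auto simp: dual_refl_def inner_add_left pairing_diag vec_eq_iff algebra_simps)
qed simp

lemma dual_word_act_alt_word_root:
  fixes k :: nat
  assumes "s \<noteq> t"
  defines "r \<equiv> alt_root s t (of_int (- A s t)) (of_int (- A t s)) k"
  shows "dual_word_act (alt_word s t k) (\<alpha> s) = fst r *\<^sub>R \<alpha> s + snd r *\<^sub>R \<alpha> t"
proof -
  have "\<alpha> s \<bullet> \<alpha>v t = - of_int (- A t s)"
    using pairing by simp
  then show ?thesis
    using dual_word_act_dihedral[OF assms(1) set_alt_word, of k "\<alpha> s"]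
    unfolding r_def alt_root_def by (simp add: pairing_diag algebra_simps split: prod.split)
qed

text \<open>For \<open>k \<ge> m\<close> the braid relation moves an \<open>s\<close> to the end of the alternating word, where it
  cancels.\<close>
lemma braid_length_bound:
  assumes "s \<noteq> t" and "0 < m"
    and braid: "dual_word_act (alt_word s t m) = dual_word_act (alt_word t s m)"
    and k: "k \<le> word_length {s, t} (dual_word_act (alt_word s t k @ [s]))"
  shows "k < m"
proof (rule ccontr)
  assume "\<not> k < m"
  then have km: "k = (k - m) + m"
    by simp
  obtain u where u: "alt_word s t k = u @ alt_word s t m" "set u \<subseteq> {s, t}" "length u = k - m"
    using alt_word_add[of s t "k - m" m] km by auto
  obtain v where v: "alt_word t s m = v @ [s]" "set v \<subseteq> {s, t}" "length v = m - 1"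
    using alt_word_snoc[OF assms(2), of t s] by blast
  have "dual_word_act (alt_word s t k @ [s]) = dual_word_act ((u @ v) @ [s, s])"
    by (simp add: u(1) v(1) braid dual_word_act_append comp_assoc)
  also have "\<dots> = dual_word_act (u @ v)"
    by (rule dual_word_act_snoc_cancel)
  finally have "word_length {s, t} (dual_word_act (alt_word s t k @ [s])) \<le> length (u @ v)"
    using word_length_le[of "u @ v" "{s, t}"] u(2) v(2) by simp
  then show False
    using k u(3) v(3) assms(2) \<open>\<not> k < m\<close> by simp
qed

lemma alt_word_root_nonneg:
  assumes st: "s \<noteq> t" and k: "k \<le> word_length {s, t} (dual_word_act (alt_word s t k @ [s]))"
  shows "\<exists>a b. 0 \<le> a \<and> 0 \<le> b \<and> dual_word_act (alt_word s t k) (\<alpha> s) = a *\<^sub>R \<alpha> s + b *\<^sub>R \<alpha> t"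
proof -
  define a b where "a = - A s t" and "b = - A t s"
  have ab: "0 \<le> a" "0 \<le> b" "a = 0 \<longleftrightarrow> b = 0"
    using gen_cartan st unfolding gen_cartan_def a_def b_def by auto
  have "0 \<le> fst (alt_root s t a b k) \<and> 0 \<le> snd (alt_root s t a b k)"
  proof (cases "4 \<le> a * b")
    case True
    then have "4 \<le> real_of_int a * real_of_int b"
      by (metis of_int_le_iff of_int_mult of_int_numeral)
    then show ?thesis
      using alt_root_nonneg_infinite[OF st] ab by simp
  next
    case False
    then obtain m where m: "0 < m"
      and coeffs: "\<And>x y. dihedral_coeffs s t a b x y (alt_word s t m) = dihedral_coeffs s t a b x y (alt_word t s m)"
      and roots: "\<forall>k<m. 0 \<le> fst (alt_root s t a b k) \<and> 0 \<le> snd (alt_root s t a b k)"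
      using dihedral_finite_type[OF st ab] by (metis not_le)
    have "dual_word_act (alt_word s t m) = dual_word_act (alt_word t s m)"
    proof
      fix v
      have ts: "set (alt_word t s m) \<subseteq> {s, t}"
        using set_alt_word[of t s m] by blast
      show "dual_word_act (alt_word s t m) v = dual_word_act (alt_word t s m) v"
        unfolding dual_word_act_dihedral[OF st set_alt_word] dual_word_act_dihedral[OF st ts]
        using coeffs unfolding a_def b_def by simp
    qed
    then have "k < m"
      using braid_length_bound[OF st m _ k] by blast
    then show ?thesis
      using roots by blast
  qed
  then show ?thesis
    using dual_word_act_alt_word_root[OF st, of k] unfolding a_def b_def by blast
qed

lemma dihedral_root_nonneg:
  assumes st: "s \<noteq> t" and v: "set v \<subseteq> {s, t}"
    and len: "word_length {s, t} (dual_word_act v) \<le> word_length {s, t} (dual_word_act (v @ [s]))"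
  shows "\<exists>a b. 0 \<le> a \<and> 0 \<le> b \<and> dual_word_act v (\<alpha> s) = a *\<^sub>R \<alpha> s + b *\<^sub>R \<alpha> t"
proof -
  obtain v\<^sub>0 where v\<^sub>0: "set v\<^sub>0 \<subseteq> {s, t}" "length v\<^sub>0 = word_length {s, t} (dual_word_act v)"
      "dual_word_act v\<^sub>0 = dual_word_act v"
    using reduced_word_exists[OF v] by blast
  have "v\<^sub>0 = [] \<or> last v\<^sub>0 = t"
  proof (rule ccontr)
    assume "\<not> (v\<^sub>0 = [] \<or> last v\<^sub>0 = t)"
    then have ne: "v\<^sub>0 \<noteq> []" and "last v\<^sub>0 \<noteq> t"
      by auto
    moreover have "last v\<^sub>0 \<in> {s, t}"
      using v\<^sub>0(1) last_in_set[OF ne] by blast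
    ultimately have "last v\<^sub>0 = s"
      by blast
    then have "v\<^sub>0 @ [s] = butlast v\<^sub>0 @ [s, s]"
      using append_butlast_last_id[OF ne] by (metis append.assoc append_Cons append_Nil)
    moreover have "dual_word_act (v @ [s]) = dual_word_act (v\<^sub>0 @ [s])"
      using v\<^sub>0(3) by (simp add: dual_word_act_append)
    ultimately have "dual_word_act (v @ [s]) = dual_word_act (butlast v\<^sub>0)"
      by (simp only: dual_word_act_snoc_cancel)
    then have "word_length {s, t} (dual_word_act (v @ [s])) \<le> length (butlast v\<^sub>0)"
      using word_length_le[of "butlast v\<^sub>0" "{s, t}"] v\<^sub>0(1) in_set_butlastD by fastforce
    moreover have "0 < length v\<^sub>0"
      using ne by simp
    ultimately show False
      using len v\<^sub>0(2) by simp
  qed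
  moreover have "length v\<^sub>0 = word_length {s, t} (dual_word_act v\<^sub>0)"
    using v\<^sub>0(2,3) by simp
  then have "\<forall>p x q. v\<^sub>0 \<noteq> p @ [x, x] @ q"
    using reduced_word_square_free[OF v\<^sub>0(1)] by blast
  ultimately have "v\<^sub>0 = alt_word s t (length v\<^sub>0)"
    using eq_alt_word[OF st v\<^sub>0(1)] by blast
  then have alt: "dual_word_act (alt_word s t (length v\<^sub>0)) = dual_word_act v"
    using v\<^sub>0(3) by simp
  then have "length v\<^sub>0 \<le> word_length {s, t} (dual_word_act (alt_word s t (length v\<^sub>0) @ [s]))"
    using len v\<^sub>0(2) by (simp add: dual_word_act_append)
  then show ?thesis
    using alt_word_root_nonneg[OF st] alt by metis
qed

lemma factorization_shorten:
  assumes v: "set v \<subseteq> {s, t}" and r: "r \<in> {s, t}"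
    and wuv: "dual_word_act w = dual_word_act u \<circ> dual_word_act v"
    and shorter: "word_length UNIV (dual_word_act (u @ [r])) < word_length UNIV (dual_word_act u)"
  obtains u' v' where "set v' \<subseteq> {s, t}" "dual_word_act w = dual_word_act u' \<circ> dual_word_act v'"
    "word_length UNIV (dual_word_act u') < word_length UNIV (dual_word_act u)"
    "word_length {s, t} (dual_word_act v') \<le> word_length {s, t} (dual_word_act v) + 1"
proof -
  obtain u' where u': "length u' = word_length UNIV (dual_word_act (u @ [r]))"
    "dual_word_act u' = dual_word_act (u @ [r])"
    using reduced_word_exists[of "u @ [r]" UNIV] by auto
  obtain v' where v': "set v' \<subseteq> {s, t}" "length v' = word_length {s, t} (dual_word_act v)"
    "dual_word_act v' = dual_word_act v"
    using reduced_word_exists[OF v] by blast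
  have "dual_word_act u' \<circ> dual_word_act (r # v') = dual_word_act (u @ [r, r] @ v')"
    using u'(2) by (simp add: dual_word_act_append comp_assoc)
  also have "\<dots> = dual_word_act (u @ v')"
    by (rule dual_word_act_cancel)
  also have "\<dots> = dual_word_act u \<circ> dual_word_act v"
    using v'(3) by (simp add: dual_word_act_append)
  finally have "dual_word_act w = dual_word_act u' \<circ> dual_word_act (r # v')"
    using wuv by simp
  moreover have "word_length UNIV (dual_word_act u') < word_length UNIV (dual_word_act u)"
    using word_length_le[of u' UNIV] u' shorter by simp
  moreover have "word_length {s, t} (dual_word_act (r # v')) \<le> word_length {s, t} (dual_word_act v) + 1"
    using word_length_le[of "r # v'" "{s, t}"] v' r by simp
  moreover have "set (r # v') \<subseteq> {s, t}"
    using v'(1) r by simp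
  ultimately show thesis
    using that by blast
qed

text \<open>Take \<open>u\<close> shortest among the factorizations \<open>w = u v\<close> with \<open>v \<in> \<langle>r\<^sub>s, r\<^sub>t\<rangle>\<close> and additive lengths.\<close>
lemma parabolic_factorization:
  assumes w: "dual_word_act w = dual_word_act (w' @ [t])"
    and reduced: "word_length UNIV (dual_word_act w) = length (w' @ [t])"
  obtains u v where "set v \<subseteq> {s, t}" "dual_word_act w = dual_word_act u \<circ> dual_word_act v"
    "word_length UNIV (dual_word_act u) + word_length {s, t} (dual_word_act v) = word_length UNIV (dual_word_act w)"
    "word_length UNIV (dual_word_act u) < word_length UNIV (dual_word_act w)"
    "\<And>r. r \<in> {s, t} \<Longrightarrow> word_length UNIV (dual_word_act u) \<le> word_length UNIV (dual_word_act (u @ [r]))"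
proof -
  let ?n = "word_length UNIV (dual_word_act w)"
  let ?len = "\<lambda>u. word_length UNIV (dual_word_act u)"
  define splits where "splits = (\<lambda>(u, v). set v \<subseteq> {s, t} \<and> dual_word_act w = dual_word_act u \<circ> dual_word_act v
      \<and> ?len u + word_length {s, t} (dual_word_act v) \<le> ?n)"
  have "word_length {s, t} (dual_word_act [t]) \<le> 1"
    using word_length_le[of "[t]" "{s, t}"] by simp
  moreover have "?len w' \<le> length w'"
    by (rule word_length_le) simp
  ultimately have "splits (w', [t])"
    using w reduced unfolding splits_def by (simp add: dual_word_act_append)
  then obtain u v where uv: "splits (u, v)" and least: "\<And>u' v'. splits (u', v') \<Longrightarrow> ?len u \<le> ?len u'"
    using ex_has_least_nat[of splits "(w', [t])" "\<lambda>(u, v). ?len u"] by fastforce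
  then have v: "set v \<subseteq> {s, t}" and wuv: "dual_word_act w = dual_word_act u \<circ> dual_word_act v"
    and le: "?len u + word_length {s, t} (dual_word_act v) \<le> ?n"
    unfolding splits_def by auto
  have "?n \<le> ?len u + word_length {s, t} (dual_word_act v)"
    unfolding wuv by (rule word_length_comp) (use v in auto)
  then have sum: "?len u + word_length {s, t} (dual_word_act v) = ?n"
    using le by simp
  have "?len u \<le> ?len w'"
    using least \<open>splits (w', [t])\<close> by blast
  also have "\<dots> < ?n"
    using word_length_le[of w' UNIV] reduced by simp
  finally have shorter: "?len u < ?n" .
  have "?len u \<le> ?len (u @ [r])" if r: "r \<in> {s, t}" for r
  proof (rule ccontr)
    assume "\<not> ?len u \<le> ?len (u @ [r])"
    then have "?len (u @ [r]) < ?len u"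
      by simp
    then obtain u' v' where "set v' \<subseteq> {s, t}" "dual_word_act w = dual_word_act u' \<circ> dual_word_act v'"
      and u': "?len u' < ?len u" and "word_length {s, t} (dual_word_act v') \<le> word_length {s, t} (dual_word_act v) + 1"
      by (rule factorization_shorten[OF v r wuv])
    then have "splits (u', v')"
      using sum unfolding splits_def by simp
    then show False
      using least u' by (meson not_le)
  qed
  then show thesis
    using that v wuv sum shorter by blast
qed

lemma reduced_word_last_not_descent:
  assumes "dual_word_act (w' @ [t]) = dual_word_act w"
    and "length (w' @ [t]) = word_length UNIV (dual_word_act w)"
    and "word_length UNIV (dual_word_act w) \<le> word_length UNIV (dual_word_act (w @ [s]))"
  shows "t \<noteq> s"
proof
  assume "t = s"
  have "dual_word_act (w @ [s]) = dual_word_act w \<circ> dual_word_act [s]"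
    by (rule dual_word_act_append)
  also have "\<dots> = dual_word_act ((w' @ [t]) @ [s])"
    unfolding dual_word_act_append[of "w' @ [t]"] assms(1) ..
  also have "\<dots> = dual_word_act w'"
    using \<open>t = s\<close> dual_word_act_snoc_cancel by simp
  finally have "word_length UNIV (dual_word_act (w @ [s])) \<le> length w'"
    using word_length_le[of w' UNIV] by simp
  then show False
    using assms(2,3) by simp
qed

lemma dual_word_act_root_pos:
  "word_length UNIV (dual_word_act w) \<le> word_length UNIV (dual_word_act (w @ [s]))
    \<Longrightarrow> dual_word_act w (\<alpha> s) \<in> pos_cone"
proof (induction "word_length UNIV (dual_word_act w)" arbitrary: w s rule: less_induct)
  case less
  let ?len = "\<lambda>u. word_length UNIV (dual_word_act u)"
  obtain w\<^sub>0 where w\<^sub>0: "length w\<^sub>0 = ?len w" "dual_word_act w\<^sub>0 = dual_word_act w"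
    using reduced_word_exists[of w UNIV] by auto
  show ?case
  proof (cases w\<^sub>0 rule: rev_cases)
    case Nil
    then show ?thesis
      using w\<^sub>0(2) root_in_pos_cone by simp
  next
    case (snoc w' t)
    have "t \<noteq> s"
      using reduced_word_last_not_descent[of w' t w s] w\<^sub>0 snoc less.prems by blast
    obtain u v where v: "set v \<subseteq> {s, t}" and wuv: "dual_word_act w = dual_word_act u \<circ> dual_word_act v"
      and sum: "?len u + word_length {s, t} (dual_word_act v) = ?len w"
      and shorter: "?len u < ?len w"
      and u: "\<And>r. r \<in> {s, t} \<Longrightarrow> ?len u \<le> ?len (u @ [r])"
      using parabolic_factorization[of w w' t s] w\<^sub>0 snoc by metis
    have "dual_word_act u (\<alpha> s) \<in> pos_cone" "dual_word_act u (\<alpha> t) \<in> pos_cone"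
      using less.hyps[OF shorter] u by auto
    moreover
    have "dual_word_act (w @ [s]) = dual_word_act u \<circ> dual_word_act (v @ [s])"
      using wuv by (simp add: dual_word_act_append comp_assoc)
    then have "?len (w @ [s]) \<le> ?len u + word_length {s, t} (dual_word_act (v @ [s]))"
      using word_length_comp[of u UNIV "v @ [s]" "{s, t}"] v by simp
    then have "word_length {s, t} (dual_word_act v) \<le> word_length {s, t} (dual_word_act (v @ [s]))"
      using less.prems sum by simp
    then obtain a b where "0 \<le> a" "0 \<le> b" "dual_word_act v (\<alpha> s) = a *\<^sub>R \<alpha> s + b *\<^sub>R \<alpha> t"
      using dihedral_root_nonneg[OF \<open>t \<noteq> s\<close>[symmetric] v] by blast
    moreover have "dual_word_act w (\<alpha> s) = dual_word_act u (dual_word_act v (\<alpha> s))"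
      using wuv by simp
    ultimately show ?thesis
      by (simp add: dual_word_act_lincomb pos_cone_lincomb)
  qed
qed

section \<open>Dominant points and bounded orbits\<close>

lemma dominant_minus_reduced_word_act:
  assumes y: "y \<in> Ylat" and dom: "\<forall>i. 0 \<le> \<alpha> i \<bullet> y"
  shows "word_length UNIV (dual_word_act (rev w)) = length w \<Longrightarrow> y - word_act w y \<in> Qplus \<alpha>v"
proof (induction w)
  case Nil
  show ?case
    unfolding Qplus_iff by (intro exI[of _ "\<lambda>_. 0"]) simp
next
  case (Cons i w)
  have reduced: "word_length UNIV (dual_word_act (rev w @ [i])) = length (rev w @ [i])"
    using Cons.prems by simp
  then have "word_length UNIV (dual_word_act (rev w)) = length w"
    using reduced_word_prefix[OF reduced] by simp
  then have IH: "y - word_act w y \<in> Qplus \<alpha>v" and "dual_word_act (rev w) (\<alpha> i) \<in> pos_cone"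
    using Cons.IH dual_word_act_root_pos reduced by simp_all
  then have "0 \<le> \<alpha> i \<bullet> word_act w y"
    using pos_cone_inner_nonneg[OF _ dom] by (simp flip: inner_dual_word_act)
  moreover have "\<alpha> i \<bullet> word_act w y \<in> \<int>"
    using Ylat_inner_Ints roots_Ylat Wv_Ylat[OF word_act_in_Wv y] by blast
  ultimately obtain c :: nat where c: "\<alpha> i \<bullet> word_act w y = of_nat c"
    by (metis Ints_cases of_int_0_le_iff of_int_of_nat_eq zero_le_imp_eq_int)
  have "y - word_act (i # w) y = (y - word_act w y) + of_nat c *\<^sub>R \<alpha>v i"
    using c by (simp add: refl_i_def)
  then show ?case
    using Qplus_add_coroot[OF IH, of c i] by (simp only:)
qed

lemma dominant_minus_orbit:
  assumes "y \<in> Ylat" and "\<forall>i. 0 \<le> \<alpha> i \<bullet> y" and "h \<in> Wv \<alpha> \<alpha>v"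
  shows "y - h y \<in> Qplus \<alpha>v"
proof -
  obtain w where h: "h = word_act w"
    using Wv_obtain_word[OF assms(3)] by blast
  obtain u where u: "length u = word_length UNIV (dual_word_act (rev w))"
    "dual_word_act u = dual_word_act (rev w)"
    using reduced_word_exists[of "rev w" UNIV] by auto
  have "word_act (rev u) = h"
    unfolding h by (rule word_act_eq_if_dual_word_act_eq) (simp add: u(2))
  moreover have "word_length UNIV (dual_word_act (rev (rev u))) = length (rev u)"
    using u by simp
  ultimately show ?thesis
    using dominant_minus_reduced_word_act[OF assms(1,2)] by blast
qed

text \<open>An element of the orbit whose distance to the upper bound has minimal height is dominant:
  otherwise reflecting it would decrease that height.\<close>
lemma bounded_orbit_has_dominant:
  assumes x: "x \<in> Ylat" and bounded: "\<forall>z\<in>(\<lambda>w. w x) ` Wv \<alpha> \<alpha>v. qle \<alpha>v z y"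
  obtains h where "h \<in> Wv \<alpha> \<alpha>v" and "\<forall>i. 0 \<le> \<alpha> i \<bullet> h x"
proof -
  define below where "below = (\<lambda>(h, m). h \<in> Wv \<alpha> \<alpha>v \<and> y - h x = (\<Sum>j\<in>UNIV. of_nat (m j) *\<^sub>R \<alpha>v j))"
  have exists: "\<exists>m. below (h, m)" if "h \<in> Wv \<alpha> \<alpha>v" for h
    using bounded that unfolding below_def qle_def Qplus_iff by auto
  then obtain m\<^sub>0 where "below (id, m\<^sub>0)"
    using Wv.Wv_id by blast
  then obtain h m where hm: "below (h, m)"
    and least: "\<And>h' m'. below (h', m') \<Longrightarrow> (\<Sum>j\<in>UNIV. m j) \<le> (\<Sum>j\<in>UNIV. m' j)"
    using ex_has_least_nat[of below "(id, m\<^sub>0)" "\<lambda>(h, m). \<Sum>j\<in>UNIV. m j"] by fastforce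
  then have h: "h \<in> Wv \<alpha> \<alpha>v" and m: "y - h x = (\<Sum>j\<in>UNIV. of_nat (m j) *\<^sub>R \<alpha>v j)"
    unfolding below_def by auto
  have "0 \<le> \<alpha> i \<bullet> h x" for i
  proof (rule ccontr)
    assume neg: "\<not> 0 \<le> \<alpha> i \<bullet> h x"
    have "\<alpha> i \<bullet> h x \<in> \<int>"
      using Ylat_inner_Ints roots_Ylat Wv_Ylat[OF h x] by blast
    then obtain c where c: "\<alpha> i \<bullet> h x = of_int c"
      by (auto elim: Ints_cases)
    have "refl_i \<alpha> \<alpha>v i \<circ> h \<in> Wv \<alpha> \<alpha>v"
      using h by (rule Wv.Wv_step)
    then obtain m' where m': "below (refl_i \<alpha> \<alpha>v i \<circ> h, m')"
      using exists by blast
    then have "(\<Sum>j\<in>UNIV. of_nat (m' j) *\<^sub>R \<alpha>v j) = (\<Sum>j\<in>UNIV. of_nat (m j) *\<^sub>R \<alpha>v j) + of_int c *\<^sub>R \<alpha>v i"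
      unfolding below_def using m c by (simp add: refl_i_def algebra_simps)
    then have "int (\<Sum>j\<in>UNIV. m' j) = int (\<Sum>j\<in>UNIV. m j) + c"
      by (rule Z_free_height_add[OF coroots_free])
    moreover have "c < 0"
      using neg c by simp
    ultimately show False
      using least[OF m'] by linarith
  qed
  then show thesis
    using that h by blast
qed

theorem orbit_bounded_iff_tits_cone:
  assumes x: "x \<in> Ylat"
  shows "(\<exists>y\<in>Ylat. \<forall>z\<in>(\<lambda>w. w x) ` Wv \<alpha> \<alpha>v. qle \<alpha>v z y) \<longleftrightarrow> x \<in> Ylat \<inter> tits_cone \<alpha> \<alpha>v"
proof
  assume "\<exists>y\<in>Ylat. \<forall>z\<in>(\<lambda>w. w x) ` Wv \<alpha> \<alpha>v. qle \<alpha>v z y"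
  then obtain h where "h \<in> Wv \<alpha> \<alpha>v" "\<forall>i. 0 \<le> \<alpha> i \<bullet> h x"
    using bounded_orbit_has_dominant[OF x] by blast
  then show "x \<in> Ylat \<inter> tits_cone \<alpha> \<alpha>v"
    using x tits_cone_iff by blast
next
  assume "x \<in> Ylat \<inter> tits_cone \<alpha> \<alpha>v"
  then obtain h where h: "h \<in> Wv \<alpha> \<alpha>v" and dom: "\<forall>i. 0 \<le> \<alpha> i \<bullet> h x"
    using tits_cone_iff by blast
  obtain g where g: "g \<in> Wv \<alpha> \<alpha>v" "\<forall>v. g (h v) = v"
    using Wv_inverse[OF h] by blast
  have hx: "h x \<in> Ylat"
    using Wv_Ylat[OF h x] .
  have "qle \<alpha>v (f x) (h x)" if f: "f \<in> Wv \<alpha> \<alpha>v" for f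
  proof -
    have "f x = (f \<circ> g) (h x)"
      using g(2) by simp
    then show ?thesis
      unfolding qle_def using dominant_minus_orbit[OF hx dom Wv_comp[OF f g(1)]] by simp
  qed
  then show "\<exists>y\<in>Ylat. \<forall>z\<in>(\<lambda>w. w x) ` Wv \<alpha> \<alpha>v. qle \<alpha>v z y"
    using hx by blast
qed

end

theorem mainTheorem4:
  fixes A :: "'i::finite \<Rightarrow> 'i \<Rightarrow> int"
    and \<alpha> \<alpha>v :: "'i \<Rightarrow> real^'n"
    and x :: "real^'n"
  assumes "gen_cartan A"
    and "\<forall>i. \<alpha> i \<in> Ylat" and "\<forall>i. \<alpha>v i \<in> Ylat"
    and "Z_free \<alpha>" and "Z_free \<alpha>v"
    and "\<forall>i j. \<alpha> j \<bullet> \<alpha>v i = of_int (A i j)"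
    and "x \<in> Ylat"
  shows "(\<exists>y\<in>Ylat. \<forall>z\<in>(\<lambda>w. w x) ` Wv \<alpha> \<alpha>v. qle \<alpha>v z y) \<longleftrightarrow> x \<in> Ylat \<inter> tits_cone \<alpha> \<alpha>v"
proof -
  interpret cartan_realization A \<alpha> \<alpha>v
    using assms(1-6) by unfold_locales
  show ?thesis
    using orbit_bounded_iff_tits_cone[OF assms(7)] .
qed

end
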